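(* Let $n\ge 1$, $\nu>0$, and let $\alpha_u,\alpha_y\ge 0$ with $\max\{\alpha_u,\alpha_y\}>0$. Let $M\in\mathbb{R}^{n\times n}$ be a diagonal matrix with positive diagonal entries, let $L\in\mathbb{R}^{n\times n}$, and let $\Pi_k\in\mathbb{R}^{n\times n}$ be a diagonal matrix whose diagonal entries all lie in $\{0,1\}$. Set $$\gamma_1=\frac{\alpha_y^2\nu}{\alpha_y^2\nu+\alpha_u^2},\qquad \gamma_2=\frac{\alpha_u^2}{\alpha_y^2\nu+\alpha_u^2},$$ $$\mathbb{S}_k=\nu LM^{-1}L^T+M-\frac{1}{\alpha_y^2\nu+\alpha_u^2}\,(\alpha_y\nu LM^{-1}-\alpha_u I)\,\Pi_k M\Pi_k\,(\alpha_y\nu LM^{-1}-\alpha_u I)^T,$$ $$L_1=\sqrt{\nu}\,L\,(I-\gamma_1\Pi_k)^{1/2}+(I-\gamma_2\Pi_k)^{1/2}M,\qquad \widehat{\mathbb{S}}_k=L_1M^{-1}L_1^T .$$ Then $$\widehat{\mathbb{S}}_k=\mathbb{S}_k+\sqrt{\nu}\,\big(L(I-\Pi_k)+(I-\Pi_k)L^T\big).$$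
   Context: Square roots of the diagonal matrices $I-\gamma_i\Pi_k$ (which have nonnegative diagonal entries since $0\le\gamma_i\le 1$) are taken entrywise. In the application, $M$ is a lumped mass matrix, $L$ the discretized convection–diffusion operator, and $\Pi_k$ the diagonal 0/1 indicator matrix of the current active set $\mathcal{A}_k\subseteq\{1,\dots,n\}$ (i.e. $(\Pi_k)_{ii}=1$ iff $i\in\mathcal{A}_k$); $\mathbb{S}_k$ is a block of the active-set Schur complement and $\widehat{\mathbb{S}}_k$ its factorized approximation. *)

theory Defs
  imports "HOL-Analysis.Analysis"
begin

definition diag_mat :: "real^'n^'n \<Rightarrow> bool" where
  "diag_mat A \<longleftrightarrow> (\<forall>i j. i \<noteq> j \<longrightarrow> A $ i $ j = 0)"

definition diag_sqrt :: "real^'n^'n \<Rightarrow> real^'n^'n" where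
  "diag_sqrt A = (\<chi> i j. if i = j then sqrt (A $ i $ i) else 0)"

end

theory Submission
  imports Defs
begin

text \<open>All matrices except \<open>L\<close> are diagonal, so every term has the shape
  \<open>L D L\<^sup>T + (L G + G L\<^sup>T) + H\<close> with diagonal \<open>D, G, H\<close>. Writing the factor as
  \<open>L\<^sub>1 = \<surd>\<nu> L A + Q M\<close> with diagonal square-root weights \<open>A, Q\<close>, and the Schur complement
  likewise, the identity reduces to three scalar identities per diagonal entry. They hold because
  the entries of \<open>\<Pi>\<^sub>k\<close> are 0 or 1 and \<open>\<gamma>\<^sub>1 + \<gamma>\<^sub>2 = 1\<close>: on the active set \<open>A\<^sup>2 = \<gamma>\<^sub>2\<close>,
  \<open>Q\<^sup>2 = \<gamma>\<^sub>1\<close> and \<open>A Q = \<surd>(\<gamma>\<^sub>1 \<gamma>\<^sub>2) = \<alpha>\<^sub>u \<alpha>\<^sub>y \<surd>\<nu> / c\<close>, which produces the cross terms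
  of the Schur complement.\<close>

definition diag_matrix :: "('n \<Rightarrow> 'a::zero) \<Rightarrow> 'a^'n^'n" where
  "diag_matrix d = (\<chi> i j. if i = j then d i else 0)"

lemma diag_matrix_entry: "diag_matrix d $ i $ j = (if i = j then d i else 0)"
  by (simp add: diag_matrix_def)

lemma diag_mat_eq_diag_matrix: "diag_mat A \<Longrightarrow> A = diag_matrix (\<lambda>i. A $ i $ i)"
  by (auto simp: diag_mat_def diag_matrix_def vec_eq_iff)

lemma mat_eq_diag_matrix: "mat k = diag_matrix (\<lambda>_. k)"
  by (simp add: mat_def diag_matrix_def)

lemma diag_matrix_add: "diag_matrix d + diag_matrix e = diag_matrix (\<lambda>i. d i + (e i :: 'a::monoid_add))"
  by (simp add: diag_matrix_def vec_eq_iff)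

lemma diag_matrix_diff: "diag_matrix d - diag_matrix e = diag_matrix (\<lambda>i. d i - (e i :: 'a::group_add))"
  by (simp add: diag_matrix_def vec_eq_iff)

lemma uminus_diag_matrix: "- diag_matrix d = diag_matrix (\<lambda>i. - (d i :: 'a::group_add))"
  by (simp add: diag_matrix_def vec_eq_iff)

lemma diag_matrix_scaleR: "c *\<^sub>R diag_matrix d = diag_matrix (\<lambda>i. c * (d i :: real))"
  by (simp add: diag_matrix_def vec_eq_iff)

lemma diag_sqrt_diag_matrix: "diag_sqrt (diag_matrix d) = diag_matrix (\<lambda>i. sqrt (d i))"
  by (simp add: diag_sqrt_def diag_matrix_def vec_eq_iff)

lemma scaleR_matrix_mul_diag_matrix: "k *\<^sub>R (A ** diag_matrix d) = A ** diag_matrix (\<lambda>i. k * d i)"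
  by (simp add: scalar_matrix_assoc matrix_scalar_ac flip: diag_matrix_scaleR)

lemma scaleR_diag_matrix_mul: "k *\<^sub>R (diag_matrix d ** A) = diag_matrix (\<lambda>i. k * d i) ** A"
  by (simp add: scalar_matrix_assoc flip: diag_matrix_scaleR)

lemma scaleR_matrix_mul_diag_matrix_mul:
  "k *\<^sub>R (A ** diag_matrix d ** B) = A ** diag_matrix (\<lambda>i. k * d i) ** B"
  by (metis scalar_matrix_assoc scaleR_matrix_mul_diag_matrix)

lemma transpose_diag_matrix [simp]: "transpose (diag_matrix d) = diag_matrix d"
  by (simp add: diag_matrix_def transpose_def vec_eq_iff)

lemma matrix_mul_diag_matrix_left:
  "(diag_matrix d ** A) $ i $ j = (d i :: 'a::semiring_1) * A $ i $ j"
  by (simp add: matrix_matrix_mult_def diag_matrix_def if_distrib if_distribR cong: if_cong)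

lemma diag_matrix_mult: "diag_matrix d ** diag_matrix e = diag_matrix (\<lambda>i. d i * (e i :: 'a::semiring_1))"
  by (simp add: vec_eq_iff matrix_mul_diag_matrix_left diag_matrix_entry)

lemma matrix_mul_diag_matrix_assoc:
  "A ** diag_matrix d ** diag_matrix e = A ** diag_matrix (\<lambda>i. d i * (e i :: 'a::semiring_1))"
  by (simp add: diag_matrix_mult flip: matrix_mul_assoc)

lemma matrix_add_rdistrib: "(A + B) ** C = A ** C + B ** (C :: 'a::semiring_1^_^_)"
  by (simp add: matrix_matrix_mult_def vec_eq_iff distrib_right sum.distrib)

lemma transpose_add: "transpose (A + B) = transpose A + transpose B"
  by (simp add: transpose_def vec_eq_iff)

lemma matrix_inv_diag_matrix:
  fixes d :: "'n::finite \<Rightarrow> 'a::field"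
  assumes "\<And>i. d i \<noteq> 0"
  shows "matrix_inv (diag_matrix d) = diag_matrix (\<lambda>i. inverse (d i))"
proof -
  let ?D = "diag_matrix d" and ?E = "diag_matrix (\<lambda>i. inverse (d i))"
  have inv: "?D ** ?E = mat 1" "?E ** ?D = mat 1"
    using assms by (simp_all add: diag_matrix_mult mat_eq_diag_matrix)
  then have "?D ** matrix_inv ?D = mat 1 \<and> matrix_inv ?D ** ?D = mat 1"
    unfolding matrix_inv_def by (rule someI[of _ ?E, OF conjI])
  then have "matrix_inv ?D = matrix_inv ?D ** (?D ** ?E)" "matrix_inv ?D ** ?D ** ?E = ?E"
    by (simp_all add: inv)
  then show ?thesis by (simp add: matrix_mul_assoc)
qed

definition sym_diag_form :: "real^'n^'n \<Rightarrow> ('n \<Rightarrow> real) \<Rightarrow> ('n \<Rightarrow> real) \<Rightarrow> ('n \<Rightarrow> real) \<Rightarrow> real^'n^'n" where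
  "sym_diag_form X f g h =
     X ** diag_matrix f ** transpose X + (X ** diag_matrix g + diag_matrix g ** transpose X) + diag_matrix h"

lemma sandwich_eq_sym_diag_form:
  "(X ** diag_matrix a + diag_matrix b) ** diag_matrix e ** transpose (X ** diag_matrix a + diag_matrix b)
   = sym_diag_form X (\<lambda>i. a i * e i * a i) (\<lambda>i. a i * e i * b i) (\<lambda>i. b i * e i * b i)"
  by (simp add: sym_diag_form_def transpose_add matrix_transpose_mul matrix_add_ldistrib matrix_add_rdistrib
      matrix_mul_assoc matrix_mul_diag_matrix_assoc diag_matrix_mult mult_ac add_ac)

lemma sym_diag_form_cong:
  "(\<And>i. f i = f' i) \<Longrightarrow> (\<And>i. g i = g' i) \<Longrightarrow> (\<And>i. h i = h' i)
   \<Longrightarrow> sym_diag_form X f g h = sym_diag_form X f' g' h'"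
  by (metis ext)

lemma sym_diag_form_add_scaleR:
  "sym_diag_form X f g h + c *\<^sub>R sym_diag_form X f' g' h'
   = sym_diag_form X (\<lambda>i. f i + c * f' i) (\<lambda>i. g i + c * g' i) (\<lambda>i. h i + c * h' i)"
  by (simp add: sym_diag_form_def matrix_add_ldistrib matrix_add_rdistrib
      scalar_matrix_assoc matrix_scalar_ac algebra_simps flip: diag_matrix_scaleR diag_matrix_add)

lemma factor_product_eq_sym_diag_form:
  fixes L :: "real^'n^'n" and a q m :: "'n \<Rightarrow> real"
  assumes "\<And>i. m i \<noteq> 0"
  shows "(s *\<^sub>R (L ** diag_matrix a) + diag_matrix q ** diag_matrix m) ** diag_matrix (\<lambda>i. inverse (m i))
           ** transpose (s *\<^sub>R (L ** diag_matrix a) + diag_matrix q ** diag_matrix m)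
         = sym_diag_form L (\<lambda>i. s\<^sup>2 * (a i)\<^sup>2 / m i) (\<lambda>i. s * (a i * q i)) (\<lambda>i. (q i)\<^sup>2 * m i)"
  unfolding scaleR_matrix_mul_diag_matrix diag_matrix_mult sandwich_eq_sym_diag_form
  using assms by (intro sym_diag_form_cong) (simp_all add: field_simps power2_eq_square)

lemma schur_complement_eq_sym_diag_form:
  fixes L B :: "real^'n^'n" and m p :: "'n \<Rightarrow> real"
  assumes "\<And>i. m i \<noteq> 0"
    and B: "B = \<beta> *\<^sub>R (L ** diag_matrix (\<lambda>i. inverse (m i))) - \<alpha> *\<^sub>R mat 1"
  shows "\<nu> *\<^sub>R (L ** diag_matrix (\<lambda>i. inverse (m i)) ** transpose L) + diag_matrix m
           - k *\<^sub>R (B ** diag_matrix p ** diag_matrix m ** diag_matrix p ** transpose B)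
           + s *\<^sub>R (L ** (mat 1 - diag_matrix p) + (mat 1 - diag_matrix p) ** transpose L)
         = sym_diag_form L (\<lambda>i. (\<nu> - k * \<beta>\<^sup>2 * (p i)\<^sup>2) / m i)
             (\<lambda>i. s * (1 - p i) + k * \<beta> * \<alpha> * (p i)\<^sup>2) (\<lambda>i. (1 - k * \<alpha>\<^sup>2 * (p i)\<^sup>2) * m i)"
proof -
  have B_diag: "B = L ** diag_matrix (\<lambda>i. \<beta> * inverse (m i)) + diag_matrix (\<lambda>_. - \<alpha>)"
    by (simp add: B scaleR_matrix_mul_diag_matrix mat_eq_diag_matrix diag_matrix_scaleR uminus_diag_matrix)
  have regroup: "X + D - k *\<^sub>R Y + Z = (X + D + Z) + (- k) *\<^sub>R Y" for X D Y Z :: "real^'n^'n"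
    by simp
  have unconstrained: "\<nu> *\<^sub>R (L ** diag_matrix (\<lambda>i. inverse (m i)) ** transpose L) + diag_matrix m
      + s *\<^sub>R (L ** (mat 1 - diag_matrix p) + (mat 1 - diag_matrix p) ** transpose L)
    = sym_diag_form L (\<lambda>i. \<nu> * inverse (m i)) (\<lambda>i. s * (1 - p i)) m"
    by (simp add: sym_diag_form_def mat_eq_diag_matrix diag_matrix_diff scaleR_add_right
        scaleR_matrix_mul_diag_matrix_mul scaleR_matrix_mul_diag_matrix scaleR_diag_matrix_mul add_ac)
  have active: "B ** diag_matrix p ** diag_matrix m ** diag_matrix p ** transpose B
    = sym_diag_form L (\<lambda>i. \<beta>\<^sup>2 * (p i)\<^sup>2 / m i) (\<lambda>i. - \<beta> * \<alpha> * (p i)\<^sup>2) (\<lambda>i. \<alpha>\<^sup>2 * (p i)\<^sup>2 * m i)"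
    unfolding B_diag matrix_mul_diag_matrix_assoc sandwich_eq_sym_diag_form
    using assms(1) by (intro sym_diag_form_cong) (simp_all add: field_simps power2_eq_square)
  show ?thesis
    unfolding regroup unconstrained active sym_diag_form_add_scaleR
    using assms(1) by (intro sym_diag_form_cong) (simp_all add: field_simps)
qed

lemma schur_factor_scalar_identities:
  fixes \<nu> \<alpha>u \<alpha>y c p :: real
  assumes "\<nu> > 0" "\<alpha>u \<ge> 0" "\<alpha>y \<ge> 0" and c: "c = \<alpha>y\<^sup>2 * \<nu> + \<alpha>u\<^sup>2" "c > 0"
    and "p = 0 \<or> p = 1"
  shows "(sqrt \<nu>)\<^sup>2 * (sqrt (1 - \<alpha>y\<^sup>2 * \<nu> / c * p))\<^sup>2 = \<nu> - 1 / c * (\<alpha>y * \<nu>)\<^sup>2 * p\<^sup>2"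
    and "sqrt \<nu> * (sqrt (1 - \<alpha>y\<^sup>2 * \<nu> / c * p) * sqrt (1 - \<alpha>u\<^sup>2 / c * p))
           = sqrt \<nu> * (1 - p) + 1 / c * (\<alpha>y * \<nu>) * \<alpha>u * p\<^sup>2"
    and "(sqrt (1 - \<alpha>u\<^sup>2 / c * p))\<^sup>2 = 1 - 1 / c * \<alpha>u\<^sup>2 * p\<^sup>2"
proof -
  have complement: "1 - \<alpha>y\<^sup>2 * \<nu> / c = \<alpha>u\<^sup>2 / c" "1 - \<alpha>u\<^sup>2 / c = \<alpha>y\<^sup>2 * \<nu> / c"
    using c by (simp_all add: field_simps)
  have "sqrt (\<alpha>u\<^sup>2 / c) * sqrt (\<alpha>y\<^sup>2 * \<nu> / c) = sqrt ((\<alpha>u * \<alpha>y * sqrt \<nu> / c)\<^sup>2)"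
    using assms(1) by (simp add: real_sqrt_mult[symmetric] power_mult_distrib power_divide power2_eq_square)
  then have cross: "sqrt (\<alpha>u\<^sup>2 / c) * sqrt (\<alpha>y\<^sup>2 * \<nu> / c) = \<alpha>u * \<alpha>y * sqrt \<nu> / c"
    using assms(1-3) c(2) by simp
  show "(sqrt \<nu>)\<^sup>2 * (sqrt (1 - \<alpha>y\<^sup>2 * \<nu> / c * p))\<^sup>2 = \<nu> - 1 / c * (\<alpha>y * \<nu>)\<^sup>2 * p\<^sup>2"
    using assms(1,6) c by (auto simp: complement field_simps power2_eq_square)
  show "sqrt \<nu> * (sqrt (1 - \<alpha>y\<^sup>2 * \<nu> / c * p) * sqrt (1 - \<alpha>u\<^sup>2 / c * p))
           = sqrt \<nu> * (1 - p) + 1 / c * (\<alpha>y * \<nu>) * \<alpha>u * p\<^sup>2"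
    using assms(6)
  proof
    assume "p = 1"
    then have "sqrt \<nu> * (sqrt (1 - \<alpha>y\<^sup>2 * \<nu> / c * p) * sqrt (1 - \<alpha>u\<^sup>2 / c * p))
        = sqrt \<nu> * (\<alpha>u * \<alpha>y * sqrt \<nu> / c)"
      by (simp add: complement cross)
    with \<open>p = 1\<close> assms(1) show ?thesis
      by (simp add: power2_eq_square)
  qed simp
  show "(sqrt (1 - \<alpha>u\<^sup>2 / c * p))\<^sup>2 = 1 - 1 / c * \<alpha>u\<^sup>2 * p\<^sup>2"
    using assms(1,6) c by (auto simp: complement(2)[symmetric])
qed

theorem proposition4p1:
  fixes M L Pi :: "real^'n^'n" and \<nu> \<alpha>u \<alpha>y :: real
  assumes "\<nu> > 0" and "\<alpha>u \<ge> 0" and "\<alpha>y \<ge> 0" and "max \<alpha>u \<alpha>y > 0"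
    and "diag_mat M" and "\<forall>i. M $ i $ i > 0"
    and "diag_mat Pi" and "\<forall>i. Pi $ i $ i = 0 \<or> Pi $ i $ i = 1"
  shows
    "let c = \<alpha>y\<^sup>2 * \<nu> + \<alpha>u\<^sup>2;
         \<gamma>1 = \<alpha>y\<^sup>2 * \<nu> / c;
         \<gamma>2 = \<alpha>u\<^sup>2 / c;
         Mi = matrix_inv M;
         I = (mat 1 :: real^'n^'n);
         B = (\<alpha>y * \<nu>) *\<^sub>R (L ** Mi) - \<alpha>u *\<^sub>R I;
         S = \<nu> *\<^sub>R (L ** Mi ** transpose L) + M
             - (1 / c) *\<^sub>R (B ** Pi ** M ** Pi ** transpose B);
         L1 = sqrt \<nu> *\<^sub>R (L ** diag_sqrt (I - \<gamma>1 *\<^sub>R Pi)) + diag_sqrt (I - \<gamma>2 *\<^sub>R Pi) ** M;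
         Shat = L1 ** Mi ** transpose L1
     in Shat = S + sqrt \<nu> *\<^sub>R (L ** (I - Pi) + (I - Pi) ** transpose L)"
proof -
  define c where "c = \<alpha>y\<^sup>2 * \<nu> + \<alpha>u\<^sup>2"
  define m where "m = (\<lambda>i. M $ i $ i)"
  define p where "p = (\<lambda>i. Pi $ i $ i)"
  have "c > 0"
    using assms(1-4) unfolding c_def max_def
    by (auto split: if_splits intro: add_pos_nonneg add_nonneg_pos)
  have m: "m i \<noteq> 0" for i
    using assms(6) by (simp add: m_def order.strict_implies_not_eq[symmetric])
  have p: "p i = 0 \<or> p i = 1" for i
    using assms(8) by (simp add: p_def)
  have M: "M = diag_matrix m"
    unfolding m_def using assms(5) by (rule diag_mat_eq_diag_matrix)
  have Pi: "Pi = diag_matrix p"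
    unfolding p_def using assms(7) by (rule diag_mat_eq_diag_matrix)
  have Mi: "matrix_inv M = diag_matrix (\<lambda>i. inverse (m i))"
    unfolding M using m by (rule matrix_inv_diag_matrix)
  have weight: "diag_sqrt (mat 1 - g *\<^sub>R Pi) = diag_matrix (\<lambda>i. sqrt (1 - g * p i))" for g
    by (simp add: Pi mat_eq_diag_matrix diag_matrix_scaleR diag_matrix_diff diag_sqrt_diag_matrix)
  show ?thesis
    unfolding Let_def c_def[symmetric] weight Mi
    unfolding M Pi factor_product_eq_sym_diag_form[OF m] schur_complement_eq_sym_diag_form[OF m refl]
    using schur_factor_scalar_identities[OF assms(1-3) c_def \<open>c > 0\<close> p]
    by (intro sym_diag_form_cong) (simp_all only:)
qed

end
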